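(* Let $\alpha,\beta,\gamma>0$. Let $[\Gamma(\alpha s+\beta)]^\gamma$ denote the branch, holomorphic in $s\in\mathbb{C}\setminus(-\infty,-\beta/\alpha]$, which is positive for real $s>-\beta/\alpha$. For $z\in\mathbb{C}\setminus(-\infty,0]$ fix a value $\theta$ of the argument of $-z$ and set $(-z)^s=\exp\{s(\log|z|+i\theta)\}$. Let $\mathcal{L}_{+\infty}$ be a right loop lying in a horizontal strip, starting at $+\infty+i\varphi_1$ and ending at $+\infty+i\varphi_2$ with $-\infty<\varphi_1<0<\varphi_2<+\infty$, and crossing the real axis at exactly one point $c$ with $0<c<1$ (so it encloses the points $s=1,2,\dots$ and leaves $s=0,-1,-2,\dots$ outside). Then the integral below converges and $$F_{\alpha,\beta}^{(\gamma)}(z)=\frac{1}{2\pi i}\int_{\mathcal{L}_{+\infty}}\frac{\Gamma(-s)\Gamma(1+s)}{[\Gamma(\alpha s+\beta)]^{\gamma}}(-z)^s\,ds+\frac{1}{[\Gamma(\beta)]^{\gamma}},\qquad z\in\mathbb{C}\setminus(-\infty,0].$$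
   Context: For $\alpha,\beta,\gamma>0$ the Le Roy type function is $F_{\alpha,\beta}^{(\gamma)}(z)=\sum_{k=0}^{\infty}\frac{z^k}{[\Gamma(\alpha k+\beta)]^{\gamma}}$, $z\in\mathbb{C}$, where $[\Gamma(\alpha k+\beta)]^\gamma$ is the positive real power of the positive number $\Gamma(\alpha k+\beta)$. *)

theory Defs
  imports "HOL-Analysis.Analysis"
begin

definition LeRoy :: "real \<Rightarrow> real \<Rightarrow> real \<Rightarrow> complex \<Rightarrow> complex" where
  "LeRoy \<alpha> \<beta> \<gamma> z = (\<Sum>k. z ^ k / complex_of_real (Gamma (\<alpha> * real k + \<beta>) powr \<gamma>))"

text \<open>A right loop parametrised by the whole real line: piecewise C1 on every compact
  interval, inside a horizontal strip, starting at +infinity + i phi1 (t to -infinity),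
  ending at +infinity + i phi2 (t to +infinity), meeting the real axis only at the point c.\<close>
definition right_loop :: "(real \<Rightarrow> complex) \<Rightarrow> real \<Rightarrow> real \<Rightarrow> real \<Rightarrow> bool" where
  "right_loop g \<phi>1 \<phi>2 c \<longleftrightarrow>
     (\<forall>a b. g piecewise_C1_differentiable_on {a..b}) \<and>
     bounded ((\<lambda>t. Im (g t)) ` UNIV) \<and>
     filterlim (\<lambda>t. Re (g t)) at_top at_bot \<and>
     filterlim (\<lambda>t. Re (g t)) at_top at_top \<and>
     ((\<lambda>t. Im (g t)) \<longlongrightarrow> \<phi>1) at_bot \<and>
     ((\<lambda>t. Im (g t)) \<longlongrightarrow> \<phi>2) at_top \<and>
     (\<exists>t. g t = complex_of_real c) \<and>
     (\<forall>t. Im (g t) = 0 \<longrightarrow> g t = complex_of_real c)"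

definition improper_contour_integral ::
  "(complex \<Rightarrow> complex) \<Rightarrow> (real \<Rightarrow> complex) \<Rightarrow> complex \<Rightarrow> bool" where
  "improper_contour_integral f g I \<longleftrightarrow>
     (\<forall>a b. (\<lambda>t. f (g t) * vector_derivative g (at t)) integrable_on {a..b}) \<and>
     ((\<lambda>(a, b). integral {a..b} (\<lambda>t. f (g t) * vector_derivative g (at t)))
        \<longlongrightarrow> I) (at_bot \<times>\<^sub>F at_top)"

end

theory Submission
  imports Defs "HOL-Complex_Analysis.Complex_Analysis"
begin

definition half_strip :: "real \<Rightarrow> real \<Rightarrow> real \<Rightarrow> complex set" where
  "half_strip R y1 y2 = {s. R \<le> Re s \<and> y1 \<le> Im s \<and> Im s \<le> y2}"

lemma convex_half_strip: "convex (half_strip R y1 y2)"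
proof -
  have "half_strip R y1 y2 = {s. R \<le> Re s} \<inter> {s. y1 \<le> Im s} \<inter> {s. Im s \<le> y2}"
    by (auto simp: half_strip_def)
  then show ?thesis
    by (simp add: convex_Int convex_halfspace_Re_ge convex_halfspace_Im_ge convex_halfspace_Im_le)
qed

lemma summable_diff_imp_convergent:
  fixes u :: "nat \<Rightarrow> 'a::banach"
  assumes "summable (\<lambda>n. u (Suc n) - u n)"
  shows "convergent u"
proof -
  have "(\<lambda>n. u n - u 0) \<longlonglongrightarrow> (\<Sum>n. u (Suc n) - u n)"
    using summable_LIMSEQ[OF assms] by (simp add: sum_lessThan_telescope)
  then have "(\<lambda>n. (u n - u 0) + u 0) \<longlonglongrightarrow> (\<Sum>n. u (Suc n) - u n) + u 0"
    by (intro tendsto_add tendsto_const)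
  then show ?thesis
    by (auto simp: convergent_def)
qed

lemma primitive_diff_bound_segment:
  fixes F f :: "complex \<Rightarrow> complex"
  assumes "\<And>s. s \<in> closed_segment a b \<Longrightarrow> (F has_field_derivative f s) (at s)"
    and "\<And>s. s \<in> closed_segment a b \<Longrightarrow> norm (f s) \<le> M"
  shows "norm (F b - F a) \<le> M * norm (b - a)"
proof (rule has_contour_integral_bound_linepath)
  show "(f has_contour_integral F b - F a) (linepath a b)"
    using contour_integral_primitive[of "closed_segment a b" F f "linepath a b"] assms(1)
    by (auto intro: has_field_derivative_at_within)
  show "0 \<le> M"
    using assms(2)[of a] norm_ge_zero order_trans by blast
qed (use assms(2) in auto)

lemma exp_minus_real_tendsto_zero: "(\<lambda>n. K * exp (- real n)) \<longlonglongrightarrow> 0"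
proof -
  have "(\<lambda>n. K * exp (-1) ^ n) \<longlonglongrightarrow> K * 0"
    by (intro tendsto_mult tendsto_const LIMSEQ_power_zero) simp
  then show ?thesis
    by (simp add: exp_of_nat_mult[symmetric] mult.commute)
qed

lemma half_strip_exp_bound_mono:
  assumes bound: "\<And>s. s \<in> half_strip R y1 y2 \<Longrightarrow> norm (f s) \<le> K * exp (- Re s)"
    and "R \<le> X" "s \<in> half_strip X y1 y2"
  shows "norm (f s) \<le> K * exp (- X)"
proof -
  have s: "s \<in> half_strip R y1 y2" "X \<le> Re s"
    using assms(2,3) by (auto simp: half_strip_def)
  have "0 \<le> K * exp (- Re s)"
    using bound[OF s(1)] norm_ge_zero order_trans by blast
  then have "K * exp (- Re s) \<le> K * exp (- X)"
    using s(2) by (intro mult_left_mono) (auto simp: zero_le_mult_iff)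
  then show ?thesis
    using bound[OF s(1)] by linarith
qed

lemma primitive_diff_half_strip_lattice:
  assumes deriv: "\<And>s. s \<in> half_strip R y1 y2 \<Longrightarrow> (F has_field_derivative f s) (at s)"
    and bound: "\<And>s. s \<in> half_strip R y1 y2 \<Longrightarrow> norm (f s) \<le> K * exp (- Re s)"
    and y: "y1 \<le> y" "y \<le> y2"
    and s: "y1 \<le> Im s" "Im s \<le> y2" "R \<le> real n" "real n \<le> Re s" "Re s \<le> real n + 1"
  shows "norm (F s - F (Complex (real n) y)) \<le> K * (1 + (y2 - y1)) * exp (- real n)"
proof -
  have seg: "closed_segment (Complex (real n) y) s \<subseteq> half_strip (real n) y1 y2"
    using s y by (intro closed_segment_subset convex_half_strip) (auto simp: half_strip_def)
  have sub: "half_strip (real n) y1 y2 \<subseteq> half_strip R y1 y2"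
    using s by (auto simp: half_strip_def)
  have "norm (F s - F (Complex (real n) y)) \<le> K * exp (- real n) * norm (s - Complex (real n) y)"
  proof (rule primitive_diff_bound_segment)
    show "(F has_field_derivative f w) (at w)" if "w \<in> closed_segment (Complex (real n) y) s" for w
      using that seg sub deriv by blast
    show "norm (f w) \<le> K * exp (- real n)" if "w \<in> closed_segment (Complex (real n) y) s" for w
      using that seg s by (intro half_strip_exp_bound_mono[OF bound]) auto
  qed
  also have "\<dots> \<le> K * exp (- real n) * (1 + (y2 - y1))"
  proof (rule mult_left_mono)
    have "\<bar>Re (s - Complex (real n) y)\<bar> \<le> 1" "\<bar>Im (s - Complex (real n) y)\<bar> \<le> y2 - y1"
      using s y by auto
    then show "norm (s - Complex (real n) y) \<le> 1 + (y2 - y1)"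
      using cmod_le[of "s - Complex (real n) y"] by linarith
    have "s \<in> half_strip (real n) y1 y2"
      using s by (auto simp: half_strip_def)
    then show "0 \<le> K * exp (- real n)"
      using half_strip_exp_bound_mono[OF bound] s norm_ge_zero order_trans by blast
  qed
  finally show ?thesis
    by (simp add: mult_ac)
qed

lemma primitive_convergent_half_strip:
  assumes deriv: "\<And>s. s \<in> half_strip R y1 y2 \<Longrightarrow> (F has_field_derivative f s) (at s)"
    and bound: "\<And>s. s \<in> half_strip R y1 y2 \<Longrightarrow> norm (f s) \<le> K * exp (- Re s)"
    and y: "y1 \<le> y" "y \<le> y2"
  shows "convergent (\<lambda>n. F (Complex (real n) y))"
proof (rule summable_diff_imp_convergent)
  obtain N :: nat where N: "R \<le> real N"
    using real_arch_simple by blast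
  define C where "C = K * (1 + (y2 - y1))"
  have diff: "norm (F (Complex (real (Suc n)) y) - F (Complex (real n) y)) \<le> C * exp (- real n)"
    if "N \<le> n" for n
  proof (unfold C_def, rule primitive_diff_half_strip_lattice[OF deriv bound y])
    show "R \<le> real n"
      using N that by (meson of_nat_le_iff order_trans)
  qed (use y in simp_all)
  have "summable (\<lambda>n. C * exp (-1) ^ n)"
    by (intro summable_mult summable_geometric) simp
  then have "summable (\<lambda>n. C * exp (- real n))"
    by (simp add: exp_of_nat_mult[symmetric] mult.commute)
  then show "summable (\<lambda>n. F (Complex (real (Suc n)) y) - F (Complex (real n) y))"
    using diff by (rule summable_comparison_test')
qed

lemma primitive_tendsto_half_strip:
  assumes deriv: "\<And>s. s \<in> half_strip R y1 y2 \<Longrightarrow> (F has_field_derivative f s) (at s)"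
    and bound: "\<And>s. s \<in> half_strip R y1 y2 \<Longrightarrow> norm (f s) \<le> K * exp (- Re s)"
    and y: "y1 \<le> y" "y \<le> y2"
    and lim: "(\<lambda>n. F (Complex (real n) y)) \<longlonglongrightarrow> L"
    and h_Re: "filterlim (\<lambda>t. Re (h t)) at_top Fl"
    and h_Im: "eventually (\<lambda>t. y1 \<le> Im (h t) \<and> Im (h t) \<le> y2) Fl"
  shows "((\<lambda>t. F (h t)) \<longlongrightarrow> L) Fl"
proof -
  define N where "N t = nat \<lfloor>Re (h t)\<rfloor>" for t
  have N_tendsto: "filterlim N at_top Fl"
    unfolding filterlim_at_top
  proof
    fix M :: nat
    from h_Re have "eventually (\<lambda>t. real M \<le> Re (h t)) Fl"
      by (simp add: filterlim_at_top)
    then show "eventually (\<lambda>t. M \<le> N t) Fl"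
      by eventually_elim (simp add: N_def le_nat_iff le_floor_iff)
  qed
  define C where "C = K * (1 + (y2 - y1))"
  have "eventually (\<lambda>t. norm (F (h t) - F (Complex (real (N t)) y)) \<le> C * exp (- real (N t))) Fl"
    using h_Im h_Re[unfolded filterlim_at_top, rule_format, of "max R 0 + 1"]
  proof eventually_elim
    case (elim t)
    have "real (N t) = of_int \<lfloor>Re (h t)\<rfloor>"
      using elim by (simp add: N_def)
    then have "R \<le> real (N t)" "real (N t) \<le> Re (h t)" "Re (h t) \<le> real (N t) + 1"
      using elim of_int_floor_le[of "Re (h t)"] real_of_int_floor_gt_diff_one[of "Re (h t)"]
      by linarith+
    then show ?case
      unfolding C_def using elim by (intro primitive_diff_half_strip_lattice[OF deriv bound y]) simp_all
  qed
  then have "((\<lambda>t. F (h t) - F (Complex (real (N t)) y)) \<longlongrightarrow> 0) Fl"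
    by (rule Lim_null_comparison)
       (use filterlim_compose[OF exp_minus_real_tendsto_zero[of C] N_tendsto] in simp)
  moreover have "((\<lambda>t. F (Complex (real (N t)) y)) \<longlongrightarrow> L) Fl"
    using filterlim_compose[OF lim N_tendsto] by simp
  ultimately show ?thesis
    using tendsto_add by fastforce
qed

lemma improper_contour_integral_primitive:
  fixes f F :: "complex \<Rightarrow> complex" and g :: "real \<Rightarrow> complex"
  assumes g: "\<And>a b. g piecewise_C1_differentiable_on {a..b}"
    and F: "\<And>t. (F has_field_derivative f (g t)) (at (g t))"
    and bot: "((\<lambda>t. F (g t)) \<longlongrightarrow> L1) at_bot"
    and top: "((\<lambda>t. F (g t)) \<longlongrightarrow> L2) at_top"
  shows "improper_contour_integral f g (L2 - L1)"
proof -
  define h where "h t = f (g t) * vector_derivative g (at t)" for t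
  have FTC: "(h has_integral (F (g b) - F (g a))) {a..b}" if "a \<le> b" for a b
  proof -
    obtain S where S: "finite S" "g C1_differentiable_on {a..b} - S" and cont: "continuous_on {a..b} g"
      using g[of a b] unfolding piecewise_C1_differentiable_on_def by blast
    have "(h has_integral ((F \<circ> g) b - (F \<circ> g) a)) {a..b}"
    proof (rule fundamental_theorem_of_calculus_interior_strong[OF S(1) that])
      show "continuous_on {a..b} (F \<circ> g)"
        by (rule continuous_on_compose[OF cont]) (auto intro!: continuous_at_imp_continuous_on DERIV_isCont F)
      fix t assume "t \<in> {a<..<b} - S"
      then have "(g has_vector_derivative vector_derivative g (at t)) (at t)"
        using S(2) by (auto simp: C1_differentiable_on_eq vector_derivative_works)
      from field_vector_diff_chain_at[OF this F]
      show "((F \<circ> g) has_vector_derivative h t) (at t)"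
        by (simp add: h_def mult.commute)
    qed
    then show ?thesis
      by simp
  qed
  have lim: "((\<lambda>p. F (g (snd p)) - F (g (fst p))) \<longlongrightarrow> L2 - L1) (at_bot \<times>\<^sub>F at_top)"
    by (intro tendsto_diff filterlim_compose[OF top filterlim_snd] filterlim_compose[OF bot filterlim_fst])
  have ev: "eventually (\<lambda>p. F (g (snd p)) - F (g (fst p)) = integral {fst p..snd p} h)
                   (at_bot \<times>\<^sub>F at_top)"
    unfolding eventually_prod_filter
  proof (intro exI conjI)
    show "eventually (\<lambda>a::real. a \<le> 0) at_bot" "eventually (\<lambda>b::real. 0 \<le> b) at_top"
      by (rule eventually_le_at_bot eventually_ge_at_top)+
    show "\<forall>a b. a \<le> 0 \<longrightarrow> 0 \<le> b \<longrightarrow> F (g (snd (a, b))) - F (g (fst (a, b))) = integral {fst (a, b)..snd (a, b)} h"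
      using FTC by (auto intro!: integral_unique[symmetric])
  qed
  have "((\<lambda>p. integral {fst p..snd p} h) \<longlongrightarrow> L2 - L1) (at_bot \<times>\<^sub>F at_top)"
    using tendsto_cong[OF ev] lim by simp
  moreover have "h integrable_on {a..b}" for a b
    using FTC[of a b] by (cases "a \<le> b") auto
  ultimately show ?thesis
    unfolding improper_contour_integral_def h_def[symmetric] case_prod_beta by blast
qed

lemma has_contour_integral_rectpath_residue:
  fixes f :: "complex \<Rightarrow> complex"
  assumes k: "k \<in> box a b" and sub: "cbox a b \<subseteq> box c d" and holo: "f holomorphic_on box c d - {k}"
  shows "(f has_contour_integral 2 * pi * \<i> * residue f k) (rectpath a b)"
proof -
  have ab: "Re a \<le> Re b" "Im a \<le> Im b"
    using k by (auto simp: in_box_complex_iff)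
  have path: "path_image (rectpath a b) \<subseteq> box c d - {k}"
    using path_image_rectpath_subset_cbox[OF ab] path_image_rectpath_inter_box[OF ab] k sub by blast
  have "contour_integral (rectpath a b) f
          = 2 * pi * \<i> * (\<Sum>p\<in>{k}. winding_number (rectpath a b) p * residue f p)"
  proof (rule Residue_theorem[OF open_box convex_connected[OF convex_box(2)] _ holo])
    show "\<forall>z. z \<notin> box c d \<longrightarrow> winding_number (rectpath a b) z = 0"
      using sub by (auto intro!: winding_number_rectpath_outside[OF ab])
  qed (use path in auto)
  then have "contour_integral (rectpath a b) f = 2 * pi * \<i> * residue f k"
    by (simp add: winding_number_rectpath[OF k])
  moreover have "f contour_integrable_on rectpath a b"
    using holo path by (intro contour_integrable_holomorphic_simple[of _ "box c d - {k}"]) auto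
  ultimately show ?thesis
    using has_contour_integral_integral by metis
qed

lemma rectpath_residue_via_primitive:
  fixes f F :: "complex \<Rightarrow> complex"
  assumes k: "k \<in> box a b" and sub: "cbox a b \<subseteq> box c d" and holo: "f holomorphic_on box c d - {k}"
    and F: "\<And>s. Im s = Im a \<or> Im s = Im b \<Longrightarrow> (F has_field_derivative f s) (at s)"
    and left: "(f has_contour_integral V1) (linepath a (Complex (Re a) (Im b)))"
    and right: "(f has_contour_integral V2) (linepath (Complex (Re b) (Im a)) b)"
  shows "(F (Complex (Re b) (Im a)) - F a) + V2 - (F b - F (Complex (Re a) (Im b))) - V1
           = 2 * pi * \<i> * residue f k"
proof -
  have horizontal: "(f has_contour_integral F q - F p) (linepath p q)"
    if "Im p = Im q" "Im p = Im a \<or> Im p = Im b" for p q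
  proof -
    have "(F has_field_derivative f s) (at s within closed_segment p q)" if "s \<in> closed_segment p q" for s
    proof (rule has_field_derivative_at_within, rule F)
      show "Im s = Im a \<or> Im s = Im b"
        using that \<open>Im p = Im a \<or> Im p = Im b\<close> closed_segment_same_Im[OF \<open>Im p = Im q\<close>] by auto
    qed
    then show ?thesis
      using contour_integral_primitive[of "closed_segment p q" F f "linepath p q"] by simp
  qed
  define a2 a4 where "a2 = Complex (Re b) (Im a)" and "a4 = Complex (Re a) (Im b)"
  have bottom: "(f has_contour_integral F a2 - F a) (linepath a a2)"
    and top: "(f has_contour_integral F a4 - F b) (linepath b a4)"
    by (intro horizontal; simp add: a2_def a4_def)+
  have left': "(f has_contour_integral - V1) (linepath a4 a)"
    using has_contour_integral_reversepath[OF valid_path_linepath left] by (simp add: a4_def)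
  have "(f has_contour_integral (F a2 - F a) + (V2 + ((F a4 - F b) + - V1))) (rectpath a b)"
    unfolding rectpath_def Let_def a2_def[symmetric] a4_def[symmetric]
    using right[folded a2_def]
    by (intro has_contour_integral_join bottom top left') (simp_all add: valid_path_join)
  then show ?thesis
    using has_contour_integral_unique[OF _ has_contour_integral_rectpath_residue[OF k sub holo]]
    by (simp add: a2_def a4_def algebra_simps)
qed

lemma half_integer_notin_Ints:
  assumes "Re s = real n + 1/2"
  shows "s \<notin> \<int>"
proof
  assume "s \<in> \<int>"
  then obtain i where "real n + 1/2 = of_int i"
    using assms by (auto simp: complex_is_Int_iff)
  then have "real_of_int 1 = of_int (2 * (i - int n))"
    by simp
  then have "1 = 2 * (i - int n)"
    by (simp only: of_int_eq_iff)
  then show False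
    by presburger
qed

lemma contour_integrable_half_integer_vertical:
  assumes holo: "f holomorphic_on {s. 0 < Re s \<and> s \<notin> \<int>}"
  shows "f contour_integrable_on linepath (Complex (real n + 1/2) y1) (Complex (real n + 1/2) y2)"
proof (rule contour_integrable_continuous_linepath)
  have "closed_segment (Complex (real n + 1/2) y1) (Complex (real n + 1/2) y2) \<subseteq> {s. 0 < Re s \<and> s \<notin> \<int>}"
  proof
    fix s assume "s \<in> closed_segment (Complex (real n + 1/2) y1) (Complex (real n + 1/2) y2)"
    then have "Re s = real n + 1/2"
      by (simp add: closed_segment_same_Re)
    then show "s \<in> {s. 0 < Re s \<and> s \<notin> \<int>}"
      using half_integer_notin_Ints[of s n] by simp
  qed
  then show "continuous_on (closed_segment (Complex (real n + 1/2) y1) (Complex (real n + 1/2) y2)) f"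
    by (intro holomorphic_on_imp_continuous_on holomorphic_on_subset[OF holo])
qed

lemma box_around_integer_subset:
  "box (Complex (real n + 1/4) y1) (Complex (real n + 7/4) y2) - {of_nat (Suc n)}
     \<subseteq> {s. 0 < Re s \<and> s \<notin> \<int>}"
proof safe
  fix s :: complex
  assume s: "s \<in> box (Complex (real n + 1/4) y1) (Complex (real n + 7/4) y2)" "s \<noteq> of_nat (Suc n)"
  then have Re_s: "real n < Re s" "Re s < real n + 2"
    by (auto simp: in_box_complex_iff)
  then show "0 < Re s"
    by linarith
  assume "s \<in> \<int>"
  then obtain i where i: "Im s = 0" "Re s = of_int i"
    by (auto simp: complex_is_Int_iff)
  then have "i = int n + 1"
    using Re_s by linarith
  then show False
    using i s(2) by (simp add: complex_eq_iff)
qed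

lemma primitive_rectangle_residue_step:
  fixes f F :: "complex \<Rightarrow> complex"
  assumes y: "y1 < 0" "0 < y2"
    and holo: "f holomorphic_on {s. 0 < Re s \<and> s \<notin> \<int>}"
    and F: "\<And>s. s \<in> - complex_of_real ` ({..0} \<union> {1..}) \<Longrightarrow> (F has_field_derivative f s) (at s)"
  defines "A n \<equiv> Complex (real n + 1/2) y2" and "B n \<equiv> Complex (real n + 1/2) y1"
    and "V n \<equiv> contour_integral (linepath (Complex (real n + 1/2) y1) (Complex (real n + 1/2) y2)) f"
  shows "F (A (Suc n)) - F (B (Suc n)) - V (Suc n)
           = F (A n) - F (B n) - V n - 2 * pi * \<i> * residue f (of_nat (Suc n))"
proof -
  define c d where "c = Complex (real n + 1/4) (y1 - 1)" and "d = Complex (real n + 7/4) (y2 + 1)"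
  have V: "(f has_contour_integral V n) (linepath (B n) (A n))" for n
    unfolding V_def A_def B_def
    by (rule has_contour_integral_integral[OF contour_integrable_half_integer_vertical[OF holo]])
  have "f holomorphic_on box c d - {of_nat (Suc n)}"
    unfolding c_def d_def by (rule holomorphic_on_subset[OF holo box_around_integer_subset])
  moreover have "of_nat (Suc n) \<in> box (B n) (A (Suc n))" "cbox (B n) (A (Suc n)) \<subseteq> box c d"
    using y by (auto simp: A_def B_def c_def d_def in_box_complex_iff in_cbox_complex_iff)
  moreover have "(F has_field_derivative f s) (at s)" if "Im s = Im (B n) \<or> Im s = Im (A (Suc n))" for s
    using that y by (intro F) (auto simp: A_def B_def complex_double_slot_eq)
  moreover have "Complex (Re (B n)) (Im (A (Suc n))) = A n" "Complex (Re (A (Suc n))) (Im (B n)) = B (Suc n)"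
    by (simp_all add: A_def B_def)
  ultimately have "(F (B (Suc n)) - F (B n)) + V (Suc n) - (F (A (Suc n)) - F (A n)) - V n
                     = 2 * pi * \<i> * residue f (of_nat (Suc n))"
    using rectpath_residue_via_primitive[of "of_nat (Suc n)" "B n" "A (Suc n)" c d f F] V by metis
  then show ?thesis
    by (simp add: algebra_simps)
qed

lemma residue_partial_sums_via_primitive:
  fixes f F :: "complex \<Rightarrow> complex"
  assumes y: "y1 < 0" "0 < y2"
    and holo: "f holomorphic_on {s. 0 < Re s \<and> s \<notin> \<int>}"
    and F: "\<And>s. s \<in> - complex_of_real ` ({..0} \<union> {1..}) \<Longrightarrow> (F has_field_derivative f s) (at s)"
  defines "A n \<equiv> Complex (real n + 1/2) y2" and "B n \<equiv> Complex (real n + 1/2) y1"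
  shows "F (A n) - F (B n) - contour_integral (linepath (B n) (A n)) f
           = - 2 * pi * \<i> * (\<Sum>k<n. residue f (of_nat (Suc k)))"
proof (induction n)
  case 0
  have "(F has_field_derivative f s) (at s within closed_segment (B 0) (A 0))"
    if "s \<in> closed_segment (B 0) (A 0)" for s
  proof (rule has_field_derivative_at_within, rule F)
    have "Re s = 1/2"
      using that by (simp add: A_def B_def closed_segment_same_Re)
    then show "s \<in> - complex_of_real ` ({..0} \<union> {1..})"
      unfolding complex_double_slot_eq by simp
  qed
  from contour_integral_primitive[OF this valid_path_linepath]
  have "(f has_contour_integral F (A 0) - F (B 0)) (linepath (B 0) (A 0))"
    by simp
  then show ?case
    by (simp add: contour_integral_unique)
next
  case (Suc n)
  have "F (A (Suc n)) - F (B (Suc n)) - contour_integral (linepath (B (Suc n)) (A (Suc n))) f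
          = F (A n) - F (B n) - contour_integral (linepath (B n) (A n)) f
            - 2 * pi * \<i> * residue f (of_nat (Suc n))"
    using primitive_rectangle_residue_step[OF y holo F, of n] unfolding A_def B_def .
  also have "\<dots> = - 2 * pi * \<i> * (\<Sum>k<n. residue f (of_nat (Suc k))) - 2 * pi * \<i> * residue f (of_nat (Suc n))"
    using Suc.IH by simp
  finally show ?case
    by (simp add: algebra_simps)
qed

lemma residues_sums_via_primitive:
  fixes f F :: "complex \<Rightarrow> complex"
  assumes y: "y1 < 0" "0 < y2"
    and holo: "f holomorphic_on {s. 0 < Re s \<and> s \<notin> \<int>}"
    and F: "\<And>s. s \<in> - complex_of_real ` ({..0} \<union> {1..}) \<Longrightarrow> (F has_field_derivative f s) (at s)"
    and vertical: "\<And>n s. N \<le> n \<Longrightarrow> Re s = real n + 1/2 \<Longrightarrow> y1 \<le> Im s \<Longrightarrow> Im s \<le> y2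
                      \<Longrightarrow> norm (f s) \<le> K * exp (- real n)"
    and upper: "(\<lambda>n. F (Complex (real n + 1/2) y2)) \<longlonglongrightarrow> L2"
    and lower: "(\<lambda>n. F (Complex (real n + 1/2) y1)) \<longlonglongrightarrow> L1"
  shows "(\<lambda>k. residue f (of_nat (Suc k))) sums ((L1 - L2) / (2 * pi * \<i>))"
proof -
  define A B where "A n = Complex (real n + 1/2) y2" and "B n = Complex (real n + 1/2) y1" for n
  define V where "V n = contour_integral (linepath (B n) (A n)) f" for n
  have "V \<longlonglongrightarrow> 0"
  proof (rule Lim_null_comparison)
    show "eventually (\<lambda>n. norm (V n) \<le> (K * (y2 - y1)) * exp (- real n)) sequentially"
      unfolding eventually_sequentially
    proof (intro exI allI impI)
      fix n assume "N \<le> n"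
      have bound: "norm (f s) \<le> K * exp (- real n)" if "s \<in> closed_segment (B n) (A n)" for s
      proof (rule vertical[OF \<open>N \<le> n\<close>])
        show "Re s = real n + 1/2" "y1 \<le> Im s" "Im s \<le> y2"
          using that y by (simp_all add: A_def B_def closed_segment_same_Re closed_segment_eq_real_ivl)
      qed
      have "0 \<le> K * exp (- real n)"
        using bound[of "A n"] by (meson ends_in_segment(2) norm_ge_zero order_trans)
      moreover have "(f has_contour_integral V n) (linepath (B n) (A n))"
        unfolding V_def A_def B_def
        by (rule has_contour_integral_integral[OF contour_integrable_half_integer_vertical[OF holo]])
      ultimately have "norm (V n) \<le> K * exp (- real n) * norm (A n - B n)"
        using has_contour_integral_bound_linepath bound by blast
      moreover have "A n - B n = \<i> * of_real (y2 - y1)"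
        by (simp add: A_def B_def complex_eq_iff)
      then have "norm (A n - B n) = y2 - y1"
        using y by (simp add: norm_mult del: of_real_diff)
      ultimately show "norm (V n) \<le> (K * (y2 - y1)) * exp (- real n)"
        by (simp add: mult_ac)
    qed
  qed (rule exp_minus_real_tendsto_zero)
  then have "(\<lambda>n. (F (A n) - F (B n) - V n) / (- 2 * pi * \<i>)) \<longlonglongrightarrow> (L2 - L1 - 0) / (- 2 * pi * \<i>)"
    using upper lower unfolding A_def B_def by (intro tendsto_divide tendsto_diff) auto
  moreover have "(F (A n) - F (B n) - V n) / (- 2 * pi * \<i>) = (\<Sum>k<n. residue f (of_nat (Suc k)))" for n
    using residue_partial_sums_via_primitive[OF y holo F, of n] by (simp add: V_def A_def B_def)
  moreover have "(L2 - L1 - 0) / (- 2 * pi * \<i>) = (L1 - L2) / (2 * pi * \<i>)"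
    by (simp add: field_simps)
  ultimately show ?thesis
    unfolding sums_def by simp
qed

definition decays_in_half_strips :: "(complex \<Rightarrow> complex) \<Rightarrow> bool" where
  "decays_in_half_strips f \<longleftrightarrow>
     (\<forall>\<delta>>0. \<forall>B. \<exists>R K. \<forall>s. R \<le> Re s \<and> \<bar>Im s\<bar> \<le> B \<and> (\<delta> \<le> \<bar>Im s\<bar> \<or> (\<exists>n::nat. Re s = real n + 1/2))
                          \<longrightarrow> norm (f s) \<le> K * exp (- Re s))"

lemma decays_in_half_strips_vertical:
  assumes "decays_in_half_strips f"
  obtains N K where "\<And>n s. N \<le> n \<Longrightarrow> Re s = real n + 1/2 \<Longrightarrow> y1 \<le> Im s \<Longrightarrow> Im s \<le> y2
                          \<Longrightarrow> norm (f s) \<le> K * exp (- real n)"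
proof -
  obtain R K where RK: "\<forall>s. R \<le> Re s \<and> \<bar>Im s\<bar> \<le> max \<bar>y1\<bar> \<bar>y2\<bar> \<and> (1 \<le> \<bar>Im s\<bar> \<or> (\<exists>n::nat. Re s = real n + 1/2))
                              \<longrightarrow> norm (f s) \<le> K * exp (- Re s)"
    using assms unfolding decays_in_half_strips_def by (meson zero_less_one)
  obtain N :: nat where "R \<le> real N"
    using real_arch_simple by blast
  show thesis
  proof (rule that[of N "max K 0"])
    fix n s assume s: "N \<le> n" "Re s = real n + 1/2" "y1 \<le> Im s" "Im s \<le> y2"
    then have "R \<le> Re s" "\<bar>Im s\<bar> \<le> max \<bar>y1\<bar> \<bar>y2\<bar>"
      using \<open>R \<le> real N\<close> by (auto simp: abs_le_iff le_max_iff_disj)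
    then have "norm (f s) \<le> K * exp (- Re s)"
      using RK s(2) by blast
    also have "\<dots> \<le> max K 0 * exp (- real n)"
      using s by (intro mult_mono) auto
    finally show "norm (f s) \<le> max K 0 * exp (- real n)" .
  qed
qed

lemma decaying_primitive_limit_in_half_strip:
  assumes deriv: "\<And>s. Im s \<noteq> 0 \<Longrightarrow> (F has_field_derivative f s) (at s)"
    and decay: "decays_in_half_strips f"
    and y: "y1 \<le> y" "y \<le> y2" "0 \<notin> {y1..y2}"
  obtains L where "(\<lambda>n. F (Complex (real n + 1/2) y)) \<longlonglongrightarrow> L"
    and "\<And>(h :: real \<Rightarrow> complex) Fl. filterlim (\<lambda>t. Re (h t)) at_top Fl \<Longrightarrow>
           eventually (\<lambda>t. y1 \<le> Im (h t) \<and> Im (h t) \<le> y2) Fl \<Longrightarrow> ((\<lambda>t. F (h t)) \<longlongrightarrow> L) Fl"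
proof -
  have "0 < min \<bar>y1\<bar> \<bar>y2\<bar>"
    using y by auto
  then obtain R K where RK: "\<forall>s. R \<le> Re s \<and> \<bar>Im s\<bar> \<le> max \<bar>y1\<bar> \<bar>y2\<bar> \<and>
                               (min \<bar>y1\<bar> \<bar>y2\<bar> \<le> \<bar>Im s\<bar> \<or> (\<exists>n::nat. Re s = real n + 1/2))
                              \<longrightarrow> norm (f s) \<le> K * exp (- Re s)"
    using decay unfolding decays_in_half_strips_def by blast
  have strip: "Im s \<noteq> 0" "norm (f s) \<le> K * exp (- Re s)" if "s \<in> half_strip R y1 y2" for s
  proof -
    have "R \<le> Re s" "y1 \<le> Im s" "Im s \<le> y2"
      using that by (auto simp: half_strip_def)
    then have "Im s \<noteq> 0" "min \<bar>y1\<bar> \<bar>y2\<bar> \<le> \<bar>Im s\<bar>" "\<bar>Im s\<bar> \<le> max \<bar>y1\<bar> \<bar>y2\<bar>"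
      using y by (auto simp: abs_le_iff min_le_iff_disj le_max_iff_disj)
    then show "Im s \<noteq> 0" "norm (f s) \<le> K * exp (- Re s)"
      using RK \<open>R \<le> Re s\<close> by auto
  qed
  note deriv' = deriv[OF strip(1)]
  obtain L where L: "(\<lambda>n. F (Complex (real n) y)) \<longlonglongrightarrow> L"
    using primitive_convergent_half_strip[OF deriv' strip(2) y(1,2)] by (auto simp: convergent_def)
  have "filterlim (\<lambda>n. 1/2 + real n) at_top sequentially"
    by (rule filterlim_tendsto_add_at_top[OF tendsto_const filterlim_real_sequentially])
  then have "filterlim (\<lambda>n. Re (Complex (real n + 1/2) y)) at_top sequentially"
    by (simp add: add.commute)
  then have "(\<lambda>n. F (Complex (real n + 1/2) y)) \<longlonglongrightarrow> L"
    using y by (intro primitive_tendsto_half_strip[OF deriv' strip(2) y(1,2) L]) auto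
  with primitive_tendsto_half_strip[OF deriv' strip(2) y(1,2) L] show ?thesis
    using that by blast
qed

lemma doubly_slotted_plane_primitive:
  fixes f :: "complex \<Rightarrow> complex"
  assumes "f holomorphic_on - complex_of_real ` ({..a} \<union> {b..})" "a < b"
  obtains F where "\<And>s. s \<in> - complex_of_real ` ({..a} \<union> {b..}) \<Longrightarrow> (F has_field_derivative f s) (at s)"
proof -
  have "open (- complex_of_real ` ({..a} \<union> {b..}))"
    unfolding image_Un by (intro open_Compl closed_Un closed_slot_left closed_slot_right)
  moreover have "starlike (- complex_of_real ` ({..a} \<union> {b..}))"
    using \<open>a < b\<close> by (rule starlike_doubly_slotted_complex_plane)
  ultimately have "\<exists>F. \<forall>s \<in> - complex_of_real ` ({..a} \<union> {b..}). (F has_field_derivative f s) (at s)"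
    using assms(1) by (intro holomorphic_starlike_primitive[where k = "{}"])
       (auto intro: holomorphic_on_imp_continuous_on holomorphic_on_imp_differentiable_at)
  with that show thesis
    by blast
qed

lemma right_loop_Im_bounded:
  assumes "right_loop g \<phi>1 \<phi>2 c"
  obtains B where "\<And>t. \<bar>Im (g t)\<bar> \<le> B" "\<phi>2 \<le> B" "- \<phi>1 \<le> B"
proof -
  have "bounded (range (\<lambda>t. Im (g t)))"
    using assms unfolding right_loop_def by (elim conjE)
  then obtain B0 where B0: "\<forall>x\<in>range (\<lambda>t. Im (g t)). \<bar>x\<bar> \<le> B0"
    unfolding bounded_real ..
  show thesis
  proof (rule that)
    show "\<bar>Im (g t)\<bar> \<le> max B0 (max \<phi>2 (- \<phi>1))" for t
      using B0 by (simp add: le_max_iff_disj)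
  qed simp_all
qed

lemma right_loop_in_slotted_plane:
  assumes "right_loop g \<phi>1 \<phi>2 c" "0 < c" "c < 1"
  shows "g t \<in> - complex_of_real ` ({..0} \<union> {1..})"
proof -
  have "Im (g t) = 0 \<Longrightarrow> g t = complex_of_real c"
    using assms(1) unfolding right_loop_def by blast
  then show ?thesis
    using assms(2,3) by (auto simp: complex_double_slot_eq)
qed

lemma right_loop_integral_residue_sum:
  fixes f :: "complex \<Rightarrow> complex" and g :: "real \<Rightarrow> complex"
  assumes loop: "right_loop g \<phi>1 \<phi>2 c" and \<phi>: "\<phi>1 < 0" "0 < \<phi>2" and c: "0 < c" "c < 1"
    and holo: "f holomorphic_on {s. Im s \<noteq> 0 \<or> (0 < Re s \<and> s \<notin> \<int>)}"
    and decay: "decays_in_half_strips f"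
  shows "\<exists>I. improper_contour_integral f g I \<and>
               (\<lambda>k. residue f (of_nat (Suc k))) sums (- I / (2 * pi * \<i>))"
proof -
  have "f holomorphic_on - complex_of_real ` ({..0} \<union> {1..})"
    using holo by (rule holomorphic_on_subset) (auto simp: complex_double_slot_eq complex_is_Int_iff)
  then obtain F where F: "\<And>s. s \<in> - complex_of_real ` ({..0} \<union> {1..}) \<Longrightarrow> (F has_field_derivative f s) (at s)"
    by (rule doubly_slotted_plane_primitive[OF _ zero_less_one]) (rule that)
  have F_off_axis: "(F has_field_derivative f s) (at s)" if "Im s \<noteq> 0" for s
    using that by (intro F) (simp add: complex_double_slot_eq)
  obtain B where B: "\<And>t. \<bar>Im (g t)\<bar> \<le> B" "\<phi>2 \<le> B" "- \<phi>1 \<le> B"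
    using right_loop_Im_bounded[OF loop] by blast
  have "\<phi>2 / 2 \<le> \<phi>2" "\<phi>2 \<le> B" "0 \<notin> {\<phi>2 / 2..B}"
    using \<phi> B by auto
  then obtain L2 where L2: "(\<lambda>n. F (Complex (real n + 1/2) \<phi>2)) \<longlonglongrightarrow> L2"
    and L2_tail: "\<And>(h :: real \<Rightarrow> complex) Fl. filterlim (\<lambda>t. Re (h t)) at_top Fl \<Longrightarrow>
           eventually (\<lambda>t. \<phi>2 / 2 \<le> Im (h t) \<and> Im (h t) \<le> B) Fl \<Longrightarrow> ((\<lambda>t. F (h t)) \<longlongrightarrow> L2) Fl"
    using decaying_primitive_limit_in_half_strip[OF F_off_axis decay] by blast
  have "- B \<le> \<phi>1" "\<phi>1 \<le> \<phi>1 / 2" "0 \<notin> {- B..\<phi>1 / 2}"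
    using \<phi> B by auto
  then obtain L1 where L1: "(\<lambda>n. F (Complex (real n + 1/2) \<phi>1)) \<longlonglongrightarrow> L1"
    and L1_tail: "\<And>(h :: real \<Rightarrow> complex) Fl. filterlim (\<lambda>t. Re (h t)) at_top Fl \<Longrightarrow>
           eventually (\<lambda>t. - B \<le> Im (h t) \<and> Im (h t) \<le> \<phi>1 / 2) Fl \<Longrightarrow> ((\<lambda>t. F (h t)) \<longlongrightarrow> L1) Fl"
    using decaying_primitive_limit_in_half_strip[OF F_off_axis decay] by blast
  have Re_g: "filterlim (\<lambda>t. Re (g t)) at_top at_top" "filterlim (\<lambda>t. Re (g t)) at_top at_bot"
    and Im_g: "((\<lambda>t. Im (g t)) \<longlongrightarrow> \<phi>2) at_top" "((\<lambda>t. Im (g t)) \<longlongrightarrow> \<phi>1) at_bot"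
    using loop unfolding right_loop_def by blast+
  have "eventually (\<lambda>t. \<phi>2 / 2 < Im (g t)) at_top" "eventually (\<lambda>t. Im (g t) < \<phi>1 / 2) at_bot"
    using order_tendstoD(1)[OF Im_g(1), of "\<phi>2 / 2"] order_tendstoD(2)[OF Im_g(2), of "\<phi>1 / 2"] \<phi>
    by simp_all
  moreover have "- B \<le> Im (g t)" "Im (g t) \<le> B" for t
    using B(1)[of t] by (simp_all add: abs_le_iff)
  ultimately have "eventually (\<lambda>t. \<phi>2 / 2 \<le> Im (g t) \<and> Im (g t) \<le> B) at_top"
    and "eventually (\<lambda>t. - B \<le> Im (g t) \<and> Im (g t) \<le> \<phi>1 / 2) at_bot"
    by (auto elim!: eventually_mono)
  with Re_g have "((\<lambda>t. F (g t)) \<longlongrightarrow> L2) at_top" "((\<lambda>t. F (g t)) \<longlongrightarrow> L1) at_bot"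
    by (auto intro: L2_tail L1_tail)
  then have integral: "improper_contour_integral f g (L2 - L1)"
    using loop F right_loop_in_slotted_plane[OF loop c] unfolding right_loop_def
    by (intro improper_contour_integral_primitive) auto
  obtain N K where "\<And>n s. N \<le> n \<Longrightarrow> Re s = real n + 1/2 \<Longrightarrow> \<phi>1 \<le> Im s \<Longrightarrow> Im s \<le> \<phi>2
                          \<Longrightarrow> norm (f s) \<le> K * exp (- real n)"
    using decays_in_half_strips_vertical[OF decay] by blast
  moreover have "f holomorphic_on {s. 0 < Re s \<and> s \<notin> \<int>}"
    using holo by (rule holomorphic_on_subset) auto
  ultimately have "(\<lambda>k. residue f (of_nat (Suc k))) sums ((L1 - L2) / (2 * pi * \<i>))"
    using residues_sums_via_primitive[OF \<phi> _ F _ L2 L1] by blast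
  with integral show ?thesis
    by (intro exI[of _ "L2 - L1"]) (simp add: minus_divide_left)
qed

lemma affine_notin_nonpos_Reals:
  assumes "\<alpha> > 0" "s \<notin> {s. Im s = 0 \<and> Re s \<le> - \<beta> / \<alpha>}"
  shows "of_real \<alpha> * s + of_real \<beta> \<notin> \<real>\<^sub>\<le>\<^sub>0"
proof
  assume "of_real \<alpha> * s + of_real \<beta> \<in> \<real>\<^sub>\<le>\<^sub>0"
  then obtain t where "t \<le> 0" "of_real \<alpha> * s + of_real \<beta> = of_real t"
    by (auto elim!: nonpos_Reals_cases)
  then have "Im s = 0" "\<alpha> * Re s + \<beta> \<le> 0"
    using assms(1) by (auto simp: complex_eq_iff)
  then show False
    using assms by (auto simp: field_simps)
qed

lemma norm_sin_squared_eq: "norm (sin z) ^ 2 = sin (Re z) ^ 2 + sinh (Im z) ^ 2"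
proof -
  have "sinh (Im z) ^ 2 = (exp (2 * Im z) + inverse (exp (2 * Im z)) - 2) / 4"
    by (simp add: sinh_def power2_eq_square field_simps flip: exp_add exp_minus)
  then show ?thesis
    by (simp add: norm_sin_squared cos_double_sin)
qed

lemma norm_sin_pi_lower_bound:
  assumes "\<delta> > 0"
  obtains m where "m > 0"
    and "\<And>s::complex. \<delta> \<le> \<bar>Im s\<bar> \<or> (\<exists>n::nat. Re s = real n + 1/2) \<Longrightarrow> m \<le> norm (sin (pi * s))"
proof
  show "min 1 (sinh (pi * \<delta>)) > 0"
    using assms by simp
  fix s :: complex
  assume s: "\<delta> \<le> \<bar>Im s\<bar> \<or> (\<exists>n::nat. Re s = real n + 1/2)"
  have sq: "norm (sin (pi * s)) ^ 2 = sin (pi * Re s) ^ 2 + sinh (pi * Im s) ^ 2"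
    using norm_sin_squared_eq[of "pi * s"] by simp
  have which: "min 1 (sinh (pi * \<delta>)) \<le> \<bar>sin (pi * Re s)\<bar> \<or> min 1 (sinh (pi * \<delta>)) \<le> \<bar>sinh (pi * Im s)\<bar>"
    using s
  proof
    assume "\<delta> \<le> \<bar>Im s\<bar>"
    then have "sinh (pi * \<delta>) \<le> sinh \<bar>pi * Im s\<bar>"
      using sinh_real_strict_mono assms by (simp add: strict_mono_less_eq abs_mult)
    then show ?thesis
      by (intro disjI2 min.coboundedI2) (simp only: sinh_real_abs)
  next
    assume "\<exists>n::nat. Re s = real n + 1/2"
    then obtain n :: nat where "Re s = real n + 1/2"
      by blast
    then have "sin (pi * Re s) = (-1) ^ n"
      by (simp add: distrib_left sin_add mult.commute)
    then show ?thesis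
      by simp
  qed
  have "\<bar>sin (pi * Re s)\<bar> \<le> norm (sin (pi * s))" "\<bar>sinh (pi * Im s)\<bar> \<le> norm (sin (pi * s))"
    using sq abs_le_square_iff[of "sin (pi * Re s)" "norm (sin (pi * s))"]
      abs_le_square_iff[of "sinh (pi * Im s)" "norm (sin (pi * s))"] by simp_all
  with which show "min 1 (sinh (pi * \<delta>)) \<le> norm (sin (pi * s))"
    by linarith
qed

lemma Gamma_reflection_complex_shifted: "Gamma (- s) * Gamma (1 + s) = - pi / sin (pi * s)"
  for s :: complex
  using Gamma_reflection_complex[of "1 + s"]
  by (simp add: distrib_left sin_add mult.commute)

lemma norm_Gamma_ge_geometric:
  fixes Q R m :: real
  assumes "0 \<le> Q" "Q \<le> R" "0 < R" "0 \<le> m"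
    and base: "\<And>w::complex. R \<le> Re w \<Longrightarrow> Re w \<le> R + 1 \<Longrightarrow> \<bar>Im w\<bar> \<le> B \<Longrightarrow> m \<le> norm (Gamma w)"
  shows "R + real n \<le> Re w \<Longrightarrow> Re w \<le> R + real n + 1 \<Longrightarrow> \<bar>Im w\<bar> \<le> B \<Longrightarrow> m * Q ^ n \<le> norm (Gamma w)"
proof (induction n arbitrary: w)
  case 0
  then show ?case
    using base by simp
next
  case (Suc n)
  define v where "v = w - 1"
  have v: "R + real n \<le> Re v" "Re v \<le> R + real n + 1" "\<bar>Im v\<bar> \<le> B"
    using Suc.prems by (auto simp: v_def)
  then have "Re v > 0"
    using \<open>0 < R\<close> by linarith
  then have "v \<notin> \<int>\<^sub>\<le>\<^sub>0"
    by (auto elim!: nonpos_Ints_cases)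
  then have "Gamma w = v * Gamma v"
    using Gamma_plus1[of v] by (simp add: v_def)
  moreover have "Q \<le> norm v"
    using v \<open>Q \<le> R\<close> complex_Re_le_cmod[of v] by linarith
  moreover have "m * Q ^ n \<le> norm (Gamma v)"
    using Suc.IH v by blast
  moreover have "0 \<le> m * Q ^ n"
    using \<open>0 \<le> m\<close> \<open>0 \<le> Q\<close> by simp
  ultimately show ?case
    by (simp add: norm_mult mult_mono mult.left_commute)
qed

lemma norm_Gamma_exp_lower_bound:
  fixes B r :: real
  assumes "0 \<le> B" "0 \<le> r"
  obtains R c where "0 < c" "\<And>w::complex. R \<le> Re w \<Longrightarrow> \<bar>Im w\<bar> \<le> B \<Longrightarrow> c * exp (r * Re w) \<le> norm (Gamma w)"
proof -
  define Q where "Q = exp r"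
  have "1 \<le> Q"
    using assms by (simp add: Q_def)
  define K where "K = cbox (Complex Q (- B)) (Complex (Q + 1) B)"
  have K: "w \<in> K \<longleftrightarrow> Q \<le> Re w \<and> Re w \<le> Q + 1 \<and> \<bar>Im w\<bar> \<le> B" for w
    by (auto simp: K_def in_cbox_complex_iff abs_le_iff)
  have Gamma_nonzero: "Gamma w \<noteq> 0" if "w \<in> K" for w
    using that \<open>1 \<le> Q\<close> by (auto simp: K Gamma_eq_zero_iff elim!: nonpos_Ints_cases)
  have "continuous_on K (\<lambda>w. norm (Gamma w))"
    using Gamma_nonzero
    by (intro continuous_on_norm holomorphic_on_imp_continuous_on holomorphic_Gamma) (auto simp: Gamma_eq_zero_iff)
  moreover have "Complex Q 0 \<in> K"
    using assms by (simp add: K)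
  ultimately obtain w0 where w0: "w0 \<in> K" "\<And>w. w \<in> K \<Longrightarrow> norm (Gamma w0) \<le> norm (Gamma w)"
    using continuous_attains_inf[of K "\<lambda>w. norm (Gamma w)"] compact_cbox unfolding K_def by blast
  define m where "m = norm (Gamma w0)"
  have "0 < m"
    using Gamma_nonzero[OF w0(1)] by (simp add: m_def)
  have strips: "m * Q ^ n \<le> norm (Gamma w)"
    if "Q + real n \<le> Re w" "Re w \<le> Q + real n + 1" "\<bar>Im w\<bar> \<le> B" for n w
    using norm_Gamma_ge_geometric[of Q Q m B n w] that \<open>1 \<le> Q\<close> \<open>0 < m\<close> w0(2) K
    unfolding m_def by auto
  show ?thesis
  proof (rule that[of "m * exp (- r * (Q + 1))" Q])
    show "0 < m * exp (- r * (Q + 1))"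
      using \<open>0 < m\<close> by simp
    fix w :: complex assume w: "Q \<le> Re w" "\<bar>Im w\<bar> \<le> B"
    define n where "n = nat \<lfloor>Re w - Q\<rfloor>"
    have n: "real n \<le> Re w - Q" "Re w - Q < real n + 1"
      using w by (auto simp: n_def)
    have "m * exp (- r * (Q + 1)) * exp (r * Re w) = m * exp (r * (Re w - Q - 1))"
      by (simp add: algebra_simps flip: exp_add)
    also have "\<dots> \<le> m * exp (r * real n)"
      using n assms \<open>0 < m\<close> by (intro mult_left_mono) (auto intro: mult_left_mono)
    also have "\<dots> = m * Q ^ n"
      by (simp add: Q_def mult.commute flip: exp_of_nat_mult)
    also have "\<dots> \<le> norm (Gamma w)"
      using strips n w by simp
    finally show "m * exp (- r * (Q + 1)) * exp (r * Re w) \<le> norm (Gamma w)" .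
  qed
qed

lemma norm_Gamma_affine_powr_lower_bound:
  fixes \<alpha> \<beta> \<gamma> a B :: real
  assumes "0 < \<alpha>" "0 < \<gamma>" "0 \<le> a" "0 \<le> B"
  obtains R c where "0 < c"
    "\<And>s::complex. R \<le> Re s \<Longrightarrow> \<bar>Im s\<bar> \<le> B \<Longrightarrow>
       c * exp (a * Re s) \<le> norm (Gamma (of_real \<alpha> * s + of_real \<beta>)) powr \<gamma>"
proof -
  define r where "r = a / (\<gamma> * \<alpha>)"
  have "0 \<le> r" "\<gamma> * r * \<alpha> = a"
    using assms by (simp_all add: r_def)
  have "0 \<le> \<alpha> * B"
    using assms by simp
  then obtain R0 c
    where Gamma_bound: "\<And>w::complex. R0 \<le> Re w \<Longrightarrow> \<bar>Im w\<bar> \<le> \<alpha> * B \<Longrightarrow> c * exp (r * Re w) \<le> norm (Gamma w)"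
      and c: "0 < c"
    by (rule norm_Gamma_exp_lower_bound[OF _ \<open>0 \<le> r\<close>]) (rule that)
  show ?thesis
  proof (rule that[of "c powr \<gamma> * exp (\<gamma> * r * \<beta>)" "(R0 - \<beta>) / \<alpha>"])
    show "0 < c powr \<gamma> * exp (\<gamma> * r * \<beta>)"
      using c by simp
    fix s :: complex assume s: "(R0 - \<beta>) / \<alpha> \<le> Re s" "\<bar>Im s\<bar> \<le> B"
    define w where "w = of_real \<alpha> * s + of_real \<beta>"
    have "R0 \<le> Re w" "\<bar>Im w\<bar> \<le> \<alpha> * B"
      using s assms by (simp_all add: w_def field_simps abs_mult)
    then have "(c * exp (r * Re w)) powr \<gamma> \<le> norm (Gamma w) powr \<gamma>"
      using c assms by (intro powr_mono2 Gamma_bound) auto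
    moreover have "(c * exp (r * Re w)) powr \<gamma> = c powr \<gamma> * exp (\<gamma> * r * \<beta>) * exp (a * Re s)"
      using c \<open>\<gamma> * r * \<alpha> = a\<close>
      by (simp add: w_def powr_mult exp_powr_real algebra_simps flip: exp_add)
    ultimately show "c powr \<gamma> * exp (\<gamma> * r * \<beta>) * exp (a * Re s)
                       \<le> norm (Gamma (of_real \<alpha> * s + of_real \<beta>)) powr \<gamma>"
      by (simp add: w_def)
  qed
qed

lemma Gamma_reflection_quotient_decays:
  fixes \<alpha> \<beta> \<gamma> :: real and G :: "complex \<Rightarrow> complex" and L :: complex
  assumes "0 < \<alpha>" "0 < \<gamma>"
    and G_norm: "\<And>s. 0 < Re s \<Longrightarrow> norm (G s) = norm (Gamma (of_real \<alpha> * s + of_real \<beta>)) powr \<gamma>"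
  shows "decays_in_half_strips (\<lambda>s. Gamma (- s) * Gamma (1 + s) / G s * exp (s * L))"
  unfolding decays_in_half_strips_def
proof (intro allI impI)
  fix \<delta> B :: real
  assume "0 < \<delta>"
  then obtain m where m: "0 < m"
    "\<And>s::complex. \<delta> \<le> \<bar>Im s\<bar> \<or> (\<exists>n::nat. Re s = real n + 1/2) \<Longrightarrow> m \<le> norm (sin (pi * s))"
    by (rule norm_sin_pi_lower_bound) (rule that)
  define B' where "B' = max B 0"
  have "0 \<le> \<bar>Re L\<bar> + 1" "0 \<le> B'"
    by (simp_all add: B'_def)
  then obtain R c where G_bound:
    "\<And>s::complex. R \<le> Re s \<Longrightarrow> \<bar>Im s\<bar> \<le> B' \<Longrightarrow>
       c * exp ((\<bar>Re L\<bar> + 1) * Re s) \<le> norm (Gamma (of_real \<alpha> * s + of_real \<beta>)) powr \<gamma>"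
    and c: "0 < c"
    by (rule norm_Gamma_affine_powr_lower_bound[OF assms(1,2)]) (rule that)
  define K where "K = pi / m * exp (B' * \<bar>Im L\<bar>) / c"
  show "\<exists>R K. \<forall>s. R \<le> Re s \<and> \<bar>Im s\<bar> \<le> B \<and> (\<delta> \<le> \<bar>Im s\<bar> \<or> (\<exists>n::nat. Re s = real n + 1/2)) \<longrightarrow>
          norm (Gamma (- s) * Gamma (1 + s) / G s * exp (s * L)) \<le> K * exp (- Re s)"
  proof (intro exI allI impI)
    fix s assume s: "max R 1 \<le> Re s \<and> \<bar>Im s\<bar> \<le> B \<and> (\<delta> \<le> \<bar>Im s\<bar> \<or> (\<exists>n::nat. Re s = real n + 1/2))"
    have "m \<le> norm (sin (pi * s))"
      using m(2) s by blast
    then have "pi / norm (sin (pi * s)) \<le> pi / m"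
      using \<open>0 < m\<close> by (intro frac_le) auto
    then have reflection: "norm (Gamma (- s) * Gamma (1 + s)) \<le> pi / m"
      by (simp add: Gamma_reflection_complex_shifted norm_divide)
    have "- (Im s * Im L) \<le> \<bar>Im s\<bar> * \<bar>Im L\<bar>"
      using abs_ge_minus_self[of "Im s * Im L"] by (simp add: abs_mult)
    also have "\<dots> \<le> B' * \<bar>Im L\<bar>"
      using s by (intro mult_right_mono) (auto simp: B'_def)
    moreover have "Re s * Re L \<le> Re s * \<bar>Re L\<bar>"
      using s by (intro mult_left_mono) auto
    ultimately have "Re s * Re L - Im s * Im L \<le> Re s * \<bar>Re L\<bar> + B' * \<bar>Im L\<bar>"
      by linarith
    then have exponential: "norm (exp (s * L)) \<le> exp (Re s * \<bar>Re L\<bar> + B' * \<bar>Im L\<bar>)"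
      by simp
    have quotient: "c * exp ((\<bar>Re L\<bar> + 1) * Re s) \<le> norm (G s)"
      using G_bound[of s] G_norm[of s] s by (simp add: B'_def le_max_iff_disj)
    have "norm (Gamma (- s) * Gamma (1 + s) / G s * exp (s * L))
        = norm (Gamma (- s) * Gamma (1 + s)) * norm (exp (s * L)) / norm (G s)"
      by (simp add: norm_mult norm_divide)
    also have "\<dots> \<le> pi / m * exp (Re s * \<bar>Re L\<bar> + B' * \<bar>Im L\<bar>) / (c * exp ((\<bar>Re L\<bar> + 1) * Re s))"
      using reflection exponential quotient c \<open>0 < m\<close> by (intro frac_le mult_mono) auto
    also have "\<dots> = pi / m / c * exp (Re s * \<bar>Re L\<bar> + B' * \<bar>Im L\<bar> - (\<bar>Re L\<bar> + 1) * Re s)"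
      using c \<open>0 < m\<close> by (simp add: exp_diff exp_add field_simps)
    also have "Re s * \<bar>Re L\<bar> + B' * \<bar>Im L\<bar> - (\<bar>Re L\<bar> + 1) * Re s = B' * \<bar>Im L\<bar> + - Re s"
      by (simp add: algebra_simps)
    also have "pi / m / c * exp (B' * \<bar>Im L\<bar> + - Re s) = K * exp (- Re s)"
      by (simp add: K_def exp_diff exp_minus field_simps)
    finally show "norm (Gamma (- s) * Gamma (1 + s) / G s * exp (s * L)) \<le> K * exp (- Re s)" .
  qed
qed

lemma residue_Gamma_reflection_mult:
  fixes P :: "complex \<Rightarrow> complex" and k :: nat
  assumes P: "P holomorphic_on ball (of_nat k) r" and "0 < r" "P (of_nat k) \<noteq> 0"
  shows "residue (\<lambda>s::complex. Gamma (- s) * Gamma (1 + s) * P s) (of_nat k) = - ((-1) ^ k * P (of_nat k))"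
proof -
  have cos_k: "cos (of_real pi * of_nat k :: complex) = (-1) ^ k"
    by (subst mult.commute) (rule cos_npi_complex')
  have "(\<lambda>s::complex. Gamma (- s) * Gamma (1 + s) * P s) = (\<lambda>s::complex. (- pi * P s) / sin (pi * s))"
    by (simp add: Gamma_reflection_complex_shifted fun_eq_iff)
  moreover have "residue (\<lambda>s::complex. (- pi * P s) / sin (pi * s)) (of_nat k)
                   = - pi * P (of_nat k) / (of_real pi * cos (of_real pi * of_nat k))"
  proof (rule residue_simple_pole_deriv[where s = "ball (of_nat k) r"])
    show "((\<lambda>s::complex. sin (pi * s)) has_field_derivative of_real pi * cos (of_real pi * of_nat k)) (at (of_nat k))"
      by (auto intro!: derivative_eq_intros)
    show "sin (of_real pi * of_nat k :: complex) = 0"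
      by (subst mult.commute) (rule sin_npi_complex')
  qed (use assms cos_k in \<open>auto intro!: holomorphic_intros\<close>)
  ultimately have "residue (\<lambda>s::complex. Gamma (- s) * Gamma (1 + s) * P s) (of_nat k)
                    = - P (of_nat k) / (-1) ^ k"
    using cos_k by simp
  also have "\<dots> = - ((-1) ^ k * P (of_nat k))"
    by (cases "even k") simp_all
  finally show ?thesis .
qed

lemma LeRoy_eq_if_sums:
  assumes "(\<lambda>k. z ^ Suc k / complex_of_real (Gamma (\<alpha> * real (Suc k) + \<beta>) powr \<gamma>)) sums S"
  shows "LeRoy \<alpha> \<beta> \<gamma> z = S + 1 / complex_of_real (Gamma \<beta> powr \<gamma>)"
proof -
  define t where "t k = z ^ k / complex_of_real (Gamma (\<alpha> * real k + \<beta>) powr \<gamma>)" for k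
  have "(\<lambda>k. t (Suc k)) sums S"
    unfolding t_def by (rule assms)
  then have "t sums (S + t 0)"
    by (simp only: sums_Suc_iff)
  then have "LeRoy \<alpha> \<beta> \<gamma> z = S + t 0"
    unfolding LeRoy_def t_def[symmetric] by (rule sums_unique[symmetric])
  then show ?thesis
    by (simp add: t_def)
qed

locale Gamma_powr_branch =
  fixes \<alpha> \<beta> \<gamma> :: real and G :: "complex \<Rightarrow> complex"
  assumes \<alpha>_pos: "0 < \<alpha>" and \<beta>_pos: "0 < \<beta>" and \<gamma>_pos: "0 < \<gamma>"
    and holomorphic: "G holomorphic_on (- {s. Im s = 0 \<and> Re s \<le> - \<beta> / \<alpha>})"
    and of_real: "\<And>x::real. x > - \<beta> / \<alpha> \<Longrightarrow>
                   G (complex_of_real x) = complex_of_real (Gamma (\<alpha> * x + \<beta>) powr \<gamma>)"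
begin

lemma Re_pos_in_slit_plane:
  assumes "0 < Re s"
  shows "s \<in> - {s. Im s = 0 \<and> Re s \<le> - \<beta> / \<alpha>}"
proof -
  have "- \<beta> / \<alpha> < 0"
    using \<alpha>_pos \<beta>_pos by simp
  then show ?thesis
    using assms by auto
qed

lemma eq_exp_ln_Gamma:
  assumes "s \<in> - {s. Im s = 0 \<and> Re s \<le> - \<beta> / \<alpha>}"
  shows "G s = exp (of_real \<gamma> * ln_Gamma (of_real \<alpha> * s + of_real \<beta>))"
proof -
  define S where "S = - {s::complex. Im s = 0 \<and> Re s \<le> - \<beta> / \<alpha>}"
  define H where "H s = exp (of_real \<gamma> * ln_Gamma (of_real \<alpha> * s + of_real \<beta>))" for s :: complex
  have "(\<lambda>s. G s - H s) holomorphic_on S"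
    unfolding H_def using holomorphic affine_notin_nonpos_Reals[OF \<alpha>_pos]
    by (intro holomorphic_intros holomorphic_on_compose[of _ _ ln_Gamma, unfolded o_def]
          holomorphic_ln_Gamma) (auto simp: S_def)
  moreover have "S = - complex_of_real ` {..- \<beta> / \<alpha>}"
    by (auto simp: S_def complex_slot_left_eq)
  then have "open S" "connected S"
    using closed_slot_left starlike_slotted_complex_plane_left by (auto intro: starlike_imp_connected)
  moreover have pos_reals: "complex_of_real x \<in> S" if "0 < x" for x
    using Re_pos_in_slit_plane[of "complex_of_real x"] that unfolding S_def by simp
  then have "complex_of_real ` {0<..} \<subseteq> S" "1 \<in> S"
    using pos_reals[of 1] by auto
  moreover have "1 islimpt complex_of_real ` {0<..}"
    unfolding islimpt_approachable
  proof (intro allI impI)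
    fix e :: real assume "e > 0"
    have "complex_of_real (1 + e/2) \<in> complex_of_real ` {0<..}"
      using \<open>e > 0\<close> by (intro imageI) simp
    then show "\<exists>x'\<in>complex_of_real ` {0<..}. x' \<noteq> 1 \<and> dist x' 1 < e"
      using \<open>e > 0\<close> by (intro bexI[of _ "of_real (1 + e/2)"]) (auto simp: dist_norm)
  qed
  moreover have "G w - H w = 0" if w: "w \<in> complex_of_real ` {0<..}" for w
  proof -
    obtain x where x: "x > 0" "w = of_real x"
      using w by auto
    then have pos: "\<alpha> * x + \<beta> > 0"
      using \<alpha>_pos \<beta>_pos by (simp add: add_pos_pos)
    have "G w = of_real (Gamma (\<alpha> * x + \<beta>) powr \<gamma>)"
      using of_real[of x] Re_pos_in_slit_plane[of "of_real x"] x by simp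
    also have "Gamma (\<alpha> * x + \<beta>) powr \<gamma> = exp (\<gamma> * ln_Gamma (\<alpha> * x + \<beta>))"
      using pos by (simp add: powr_def Gamma_real_pos_exp)
    also have "of_real (exp (\<gamma> * ln_Gamma (\<alpha> * x + \<beta>))) = H w"
      using ln_Gamma_complex_of_real[OF pos] by (simp add: H_def x(2) flip: exp_of_real)
    finally show ?thesis
      by simp
  qed
  ultimately have "G s - H s = 0"
    using analytic_continuation[of "\<lambda>s. G s - H s" S "complex_of_real ` {0<..}" 1 s] assms
    by (simp add: S_def)
  then show ?thesis
    by (simp add: H_def)
qed

lemma nonzero: "s \<in> - {s. Im s = 0 \<and> Re s \<le> - \<beta> / \<alpha>} \<Longrightarrow> G s \<noteq> 0"
  using eq_exp_ln_Gamma by simp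

lemma norm_eq: "0 < Re s \<Longrightarrow> norm (G s) = norm (Gamma (of_real \<alpha> * s + of_real \<beta>)) powr \<gamma>"
proof -
  assume "0 < Re s"
  then have s: "s \<in> - {s. Im s = 0 \<and> Re s \<le> - \<beta> / \<alpha>}"
    by (rule Re_pos_in_slit_plane)
  then have "of_real \<alpha> * s + of_real \<beta> \<notin> \<int>\<^sub>\<le>\<^sub>0"
    using affine_notin_nonpos_Reals[OF \<alpha>_pos] nonpos_Ints_subset_nonpos_Reals by blast
  then show ?thesis
    using eq_exp_ln_Gamma[OF s] by (simp add: Gamma_complex_altdef exp_powr_real mult.commute)
qed

definition integrand :: "complex \<Rightarrow> complex \<Rightarrow> complex" where
  "integrand L s = Gamma (- s) * Gamma (1 + s) / G s * exp (s * L)"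

lemma integrand_holomorphic: "integrand L holomorphic_on {s. Im s \<noteq> 0 \<or> (0 < Re s \<and> s \<notin> \<int>)}"
proof -
  have sub: "{s. Im s \<noteq> 0 \<or> (0 < Re s \<and> s \<notin> \<int>)} \<subseteq> - {s. Im s = 0 \<and> Re s \<le> - \<beta> / \<alpha>} - \<int>"
    using Re_pos_in_slit_plane by (auto simp: complex_is_Int_iff)
  have "- s \<notin> \<int>\<^sub>\<le>\<^sub>0" "1 + s \<notin> \<int>\<^sub>\<le>\<^sub>0" if "s \<notin> \<int>" for s :: complex
    using that by (metis Ints_1 add_in_Ints_iff_left minus_in_Ints_iff nonpos_Ints_Int)+
  then show ?thesis
    using sub nonzero unfolding integrand_def
    by (intro holomorphic_intros holomorphic_Gamma' holomorphic_on_subset[OF holomorphic]) auto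
qed

lemma integrand_decays: "decays_in_half_strips (integrand L)"
  unfolding integrand_def by (rule Gamma_reflection_quotient_decays[OF \<alpha>_pos \<gamma>_pos norm_eq])

lemma residue_integrand:
  "residue (integrand L) (of_nat (Suc k))
     = - ((- exp L) ^ Suc k / complex_of_real (Gamma (\<alpha> * real (Suc k) + \<beta>) powr \<gamma>))"
proof -
  define P where "P s = exp (s * L) / G s" for s :: complex
  have ball: "ball (of_nat (Suc k)) (1/2) \<subseteq> - {s. Im s = 0 \<and> Re s \<le> - \<beta> / \<alpha>}"
  proof
    fix s :: complex assume "s \<in> ball (of_nat (Suc k)) (1/2)"
    then have "\<bar>Re s - real (Suc k)\<bar> < 1/2"
      using abs_Re_le_cmod[of "s - of_nat (Suc k)"] by (simp add: dist_norm norm_minus_commute)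
    then show "s \<in> - {s. Im s = 0 \<and> Re s \<le> - \<beta> / \<alpha>}"
      by (intro Re_pos_in_slit_plane) linarith
  qed
  have "G s \<noteq> 0" if "s \<in> ball (of_nat (Suc k)) (1/2)" for s
    using ball nonzero that by blast
  then have "P holomorphic_on ball (of_nat (Suc k)) (1/2)"
    unfolding P_def by (intro holomorphic_intros holomorphic_on_subset[OF holomorphic ball]) auto
  moreover have "P (of_nat (Suc k)) \<noteq> 0"
    using nonzero[OF Re_pos_in_slit_plane[of "of_nat (Suc k)"]] by (simp add: P_def)
  moreover have "integrand L = (\<lambda>s. Gamma (- s) * Gamma (1 + s) * P s)"
    by (simp add: integrand_def P_def fun_eq_iff)
  ultimately have "residue (integrand L) (of_nat (Suc k)) = - ((-1) ^ Suc k * P (of_nat (Suc k)))"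
    using residue_Gamma_reflection_mult[of P "Suc k" "1/2"] by simp
  moreover have "G (of_nat (Suc k)) = complex_of_real (Gamma (\<alpha> * real (Suc k) + \<beta>) powr \<gamma>)"
    using of_real[of "real (Suc k)"] Re_pos_in_slit_plane[of "of_nat (Suc k)"] by simp
  moreover have "(-1) ^ Suc k * exp (of_nat (Suc k) * L) = (- exp L) ^ Suc k"
    unfolding exp_of_nat_mult power_mult_distrib[symmetric] by simp
  ultimately show ?thesis
    unfolding P_def by (simp only: times_divide_eq_right)
qed

end

theorem theorem2p2:
  fixes \<alpha> \<beta> \<gamma> \<theta> \<phi>1 \<phi>2 c :: real
    and G :: "complex \<Rightarrow> complex" and g :: "real \<Rightarrow> complex" and z :: complex
  assumes "\<alpha> > 0" "\<beta> > 0" "\<gamma> > 0"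
    and G_holo: "G holomorphic_on (- {s. Im s = 0 \<and> Re s \<le> - \<beta> / \<alpha>})"
    and G_real: "\<And>x::real. x > - \<beta> / \<alpha> \<Longrightarrow>
                   G (complex_of_real x) = complex_of_real (Gamma (\<alpha> * x + \<beta>) powr \<gamma>)"
    and z: "z \<notin> {w. Im w = 0 \<and> Re w \<le> 0}"
    and \<theta>: "- z = complex_of_real (norm z) * exp (\<i> * complex_of_real \<theta>)"
    and "\<phi>1 < 0" "0 < \<phi>2" "0 < c" "c < 1"
    and loop: "right_loop g \<phi>1 \<phi>2 c"
  shows "\<exists>I. improper_contour_integral
              (\<lambda>s. Gamma (- s) * Gamma (1 + s) / G s
                     * exp (s * (complex_of_real (ln (norm z)) + \<i> * complex_of_real \<theta>)))
              g I
           \<and> LeRoy \<alpha> \<beta> \<gamma> z = I / (2 * pi * \<i>) + 1 / complex_of_real (Gamma \<beta> powr \<gamma>)"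
proof -
  interpret Gamma_powr_branch \<alpha> \<beta> \<gamma> G
    using assms by unfold_locales
  define L where "L = complex_of_real (ln (norm z)) + \<i> * complex_of_real \<theta>"
  have "exp L = - z"
    using z \<theta> by (auto simp: L_def exp_add exp_of_real)
  obtain I where I: "improper_contour_integral (integrand L) g I"
    and "(\<lambda>k. residue (integrand L) (of_nat (Suc k))) sums (- I / (2 * pi * \<i>))"
    using right_loop_integral_residue_sum[OF loop \<open>\<phi>1 < 0\<close> \<open>0 < \<phi>2\<close> \<open>0 < c\<close> \<open>c < 1\<close>
        integrand_holomorphic[of L] integrand_decays[of L]] by blast
  from sums_minus[OF this(2)[unfolded residue_integrand \<open>exp L = - z\<close>]]
  have "(\<lambda>k. z ^ Suc k / complex_of_real (Gamma (\<alpha> * real (Suc k) + \<beta>) powr \<gamma>)) sums (I / (2 * pi * \<i>))"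
    by simp
  then have "LeRoy \<alpha> \<beta> \<gamma> z = I / (2 * pi * \<i>) + 1 / complex_of_real (Gamma \<beta> powr \<gamma>)"
    by (rule LeRoy_eq_if_sums)
  with I show ?thesis
    unfolding integrand_def[abs_def] L_def by blast
qed

end
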